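(* Let $\mathcal{A}$ be a finite set of positive integers, let $k$ be an odd positive integer, and let $w \leqslant z$ be real numbers. Then $$ S(\mathcal{A}, z) \leqslant \sum_{r=0}^{k-1} (-1)^r \frac{k-r}{k} \sum_{w \leqslant p_r < p_{r-1} < \cdots < p_1 < z} S\left(\mathcal{A}_{p_1 p_2 \cdots p_r}, w\right), $$ that is, $$ S(\mathcal{A}, z) \leqslant S(\mathcal{A}, w) - \frac{k-1}{k}\sum_{w \leqslant p_1 < z} S(\mathcal{A}_{p_1}, w) + \frac{k-2}{k}\sum_{w \leqslant p_2 < p_1 < z} S(\mathcal{A}_{p_1p_2}, w) - \frac{k-3}{k}\sum_{w \leqslant p_3<p_2 < p_1 < z} S(\mathcal{A}_{p_1p_2p_3}, w) + \cdots - \frac{2}{k}\sum_{w \leqslant p_{k-2}<\cdots < p_1 < z} S(\mathcal{A}_{p_1\cdots p_{k-2}}, w) + \frac{1}{k}\sum_{w \leqslant p_{k-1}<\cdots < p_1 < z} S(\mathcal{A}_{p_1\cdots p_{k-1}}, w), $$ where the $r=0$ term is $S(\mathcal{A}, w)$.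
   Context: Throughout, $p, p_1, p_2, \dots$ denote prime numbers. For a finite set $\mathcal{A}$ of positive integers and a positive integer $d$, $\mathcal{A}_d = \{a : ad \in \mathcal{A}\}$. For real $z$, $S(\mathcal{A}, z)$ denotes the number of $a \in \mathcal{A}$ with $\gcd\left(a, \prod_{p<z} p\right) = 1$, i.e. the number of elements of $\mathcal{A}$ having no prime factor less than $z$. *)

theory Defs
  imports "HOL-Analysis.Analysis"
begin

definition sift :: "nat set \<Rightarrow> real \<Rightarrow> nat" where
  "sift A z = card {a \<in> A. \<forall>p. prime p \<and> real p < z \<longrightarrow> \<not> p dvd a}"

definition subseq_d :: "nat set \<Rightarrow> nat \<Rightarrow> nat set" where
  "subseq_d A d = {a. a * d \<in> A}"

text \<open>Sets {p_1,...,p_r} of r distinct primes with w \<le> p_i < z; a strictly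
  decreasing chain p_r < ... < p_1 corresponds bijectively to such a set.\<close>
definition prime_sets :: "real \<Rightarrow> real \<Rightarrow> nat \<Rightarrow> nat set set" where
  "prime_sets w z r = {P. finite P \<and> card P = r \<and> (\<forall>p\<in>P. prime p \<and> w \<le> real p \<and> real p < z)}"

end

theory Submission imports Defs begin

(* Call a w-rough if it has no prime factor below w, and for such a let m(a) be the number
   of primes in [w, z) dividing a. Counting pairs (a, P) with P a set of r such primes
   dividing a shows that the r-th inner sum on the right is the sum of C(m(a), r) over the
   w-rough a in A, while the left side counts the w-rough a with m(a) = 0. So it suffices
   that  sum_{r<k} (-1)^r (k - r) C(m, r)  is k for m = 0 and nonnegative for odd k: it is
   the sum over j < k of the partial sums  sum_{r<=j} (-1)^r C(m, r) = (-1)^j C(m - 1, j),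
   which for m >= 1 telescopes once more to 1 (m = 1) or (-1)^(k-1) C(m - 2, k - 1) >= 0. *)

lemma sum_lessThan_diff_mult_eq_sum_partial_sums:
  fixes f :: "nat \<Rightarrow> 'a::comm_semiring_1"
  shows "(\<Sum>r<k. of_nat (k - r) * f r) = (\<Sum>j<k. \<Sum>r\<le>j. f r)"
proof (induction k)
  case (Suc k)
  have "(\<Sum>r<Suc k. of_nat (Suc k - r) * f r) = (\<Sum>r<Suc k. of_nat (k - r) * f r + f r)"
    by (intro sum.cong) (auto simp: Suc_diff_le algebra_simps)
  also have "\<dots> = (\<Sum>r<k. of_nat (k - r) * f r) + (\<Sum>r\<le>k. f r)"
    by (simp add: sum.distrib flip: lessThan_Suc_atMost)
  finally show ?case using Suc by simp
qed simp

lemma alternating_sum_choose_Suc_atMost: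
  "(\<Sum>r\<le>n. (-1) ^ r * of_nat (Suc m choose r) :: 'a::comm_ring_1) = (-1) ^ n * of_nat (m choose n)"
proof (induction n)
  case (Suc n)
  then show ?case by (simp add: algebra_simps)
qed simp

lemma alternating_sum_choose_atMost_0:
  "(\<Sum>r\<le>n. (-1) ^ r * of_nat (0 choose r) :: 'a::comm_ring_1) = 1"
  by (induction n) auto

lemma weighted_alternating_sum_choose_ge:
  assumes "odd k"
  shows "(if m = 0 then of_nat k else 0)
    \<le> (\<Sum>r<k. (-1) ^ r * of_nat (k - r) * of_nat (m choose r) :: 'a::linordered_idom)"
proof -
  have "(\<Sum>r<k. (-1) ^ r * of_nat (k - r) * of_nat (m choose r) :: 'a)
      = (\<Sum>j<k. \<Sum>r\<le>j. (-1) ^ r * of_nat (m choose r))"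
    using sum_lessThan_diff_mult_eq_sum_partial_sums[of k "\<lambda>r. (-1) ^ r * of_nat (m choose r) :: 'a"]
    by (simp add: ac_simps)
  also have "\<dots> \<ge> (if m = 0 then of_nat k else 0)"
  proof (cases m)
    case 0
    then show ?thesis by (simp add: alternating_sum_choose_atMost_0)
  next
    case (Suc m')
    obtain l where k: "k = Suc (2 * l)" using assms oddE by fastforce
    have "(\<Sum>j<k. \<Sum>r\<le>j. (-1) ^ r * of_nat (m choose r) :: 'a)
        = (\<Sum>j\<le>2 * l. (-1) ^ j * of_nat (m' choose j))"
      by (simp add: Suc k alternating_sum_choose_Suc_atMost lessThan_Suc_atMost)
    also have "\<dots> \<ge> 0"
    proof (cases m')
      case 0
      then show ?thesis by (simp add: alternating_sum_choose_atMost_0)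
    next
      case (Suc m'')
      then show ?thesis by (simp add: alternating_sum_choose_Suc_atMost)
    qed
    finally show ?thesis using Suc by simp
  qed
  finally show ?thesis .
qed

lemma weighted_alternating_sum_choose_div_ge:
  assumes "odd k"
  shows "(if m = 0 then 1 else 0)
    \<le> (\<Sum>r<k. (-1) ^ r * (of_nat (k - r) / of_nat k) * of_nat (m choose r) :: 'a::linordered_field)"
proof -
  have "k > 0"
    using assms by (rule odd_pos)
  have "(if m = 0 then 1 else 0) \<le> (if m = 0 then of_nat k else 0) / (of_nat k :: 'a)"
    using \<open>k > 0\<close> by simp
  also have "\<dots> \<le> (\<Sum>r<k. (-1) ^ r * of_nat (k - r) * of_nat (m choose r)) / of_nat k"
    using \<open>k > 0\<close> by (intro divide_right_mono weighted_alternating_sum_choose_ge assms) simp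
  also have "\<dots> = (\<Sum>r<k. (-1) ^ r * (of_nat (k - r) / of_nat k) * of_nat (m choose r))"
    by (simp add: sum_divide_distrib)
  finally show ?thesis .
qed

definition rough :: "real \<Rightarrow> nat \<Rightarrow> bool" where
  "rough w a \<longleftrightarrow> (\<forall>p. prime p \<and> real p < w \<longrightarrow> \<not> p dvd a)"

lemma sift_eq_card_rough: "sift A z = card {a \<in> A. rough z a}"
  by (simp add: sift_def rough_def)

lemma rough_mult_iff: "rough w (a * b) \<longleftrightarrow> rough w a \<and> rough w b"
  by (auto simp: rough_def prime_dvd_mult_iff)

lemma rough_prod_primes:
  assumes "finite P" "\<forall>p\<in>P. prime p \<and> w \<le> real p"
  shows "rough w (\<Prod>P)"
  unfolding rough_def
proof safe
  fix q assume q: "prime q" "real q < w" "q dvd \<Prod>P"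
  then obtain p where "p \<in> P" "q dvd p"
    using assms(1) prime_dvd_prod_iff[of P q id] by auto
  with assms(2) q show False by (metis linorder_not_le primes_dvd_imp_eq)
qed

lemma prod_primes_dvd_iff:
  fixes P :: "nat set"
  assumes "finite P" "\<forall>p\<in>P. prime p"
  shows "\<Prod>P dvd a \<longleftrightarrow> (\<forall>p\<in>P. p dvd a)"
  using assms
proof (induction P rule: finite_induct)
  case (insert p P)
  have "coprime p (\<Prod>P)"
    using insert by (intro prod_coprime_right) (metis insertCI primes_coprime)
  with insert show ?case
    by (auto intro: divides_mult dest: dvd_mult_left dvd_mult_right)
qed simp

lemma sift_subseq_d_rough:
  assumes "d > 0" "rough w d"
  shows "sift (subseq_d A d) w = card {a \<in> A. rough w a \<and> d dvd a}"
proof -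
  have "bij_betw (\<lambda>b. b * d) {b \<in> subseq_d A d. rough w b} {a \<in> A. rough w a \<and> d dvd a}"
    using assms by (intro bij_betw_byWitness[where f' = "\<lambda>a. a div d"])
      (auto simp: subseq_d_def rough_mult_iff mult.commute elim!: dvdE)
  then show ?thesis
    by (simp add: sift_eq_card_rough bij_betw_same_card)
qed

lemma sum_card_supersets_eq_sum_choose:
  assumes "finite A" "finite S" "\<And>a. a \<in> A \<Longrightarrow> Q a \<subseteq> S"
  shows "(\<Sum>P | P \<subseteq> S \<and> card P = r. card {a \<in> A. P \<subseteq> Q a}) = (\<Sum>a\<in>A. card (Q a) choose r)"
proof -
  have fin: "finite {P. P \<subseteq> S \<and> card P = r}"
    using assms(2) by simp
  have "(\<Sum>P | P \<subseteq> S \<and> card P = r. card {a \<in> A. P \<subseteq> Q a})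
      = (\<Sum>P | P \<subseteq> S \<and> card P = r. \<Sum>a\<in>A. if P \<subseteq> Q a then 1 else 0)"
    using assms(1) by (simp add: sum.If_cases Int_def)
  also have "\<dots> = (\<Sum>a\<in>A. \<Sum>P | P \<subseteq> S \<and> card P = r. if P \<subseteq> Q a then 1 else 0)"
    by (rule sum.swap)
  also have "\<dots> = (\<Sum>a\<in>A. card {P. P \<subseteq> Q a \<and> card P = r})"
    using fin assms(3) by (intro sum.cong) (auto simp: sum.If_cases Int_def intro!: arg_cong[where f = card])
  also have "\<dots> = (\<Sum>a\<in>A. card (Q a) choose r)"
    using assms by (intro sum.cong) (auto intro: n_subsets finite_subset)
  finally show ?thesis .
qed

lemma finite_primes_between: "finite {p::nat. prime p \<and> w \<le> real p \<and> real p < z}"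
proof (rule finite_subset)
  show "{p::nat. prime p \<and> w \<le> real p \<and> real p < z} \<subseteq> {..nat \<lceil>z\<rceil>}"
    by (auto, linarith)
qed simp

lemma prime_sets_eq:
  "prime_sets w z r = {P. P \<subseteq> {p. prime p \<and> w \<le> real p \<and> real p < z} \<and> card P = r}"
  using finite_primes_between by (auto simp: prime_sets_def intro: finite_subset)

lemma sum_prime_sets_sift_eq:
  assumes "finite A"
  shows "(\<Sum>P\<in>prime_sets w z r. sift (subseq_d A (\<Prod>P)) w)
    = (\<Sum>a | a \<in> A \<and> rough w a. card {p. prime p \<and> w \<le> real p \<and> real p < z \<and> p dvd a} choose r)"
proof -
  define S where "S = {p::nat. prime p \<and> w \<le> real p \<and> real p < z}"
  define Q where "Q a = {p \<in> S. p dvd a}" for a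
  have "sift (subseq_d A (\<Prod>P)) w = card {a \<in> {a \<in> A. rough w a}. P \<subseteq> Q a}"
    if "P \<in> prime_sets w z r" for P
  proof -
    have P: "finite P" "\<forall>p\<in>P. prime p \<and> w \<le> real p" "P \<subseteq> S"
      using that by (auto simp: prime_sets_def S_def)
    have "\<Prod>P > 0"
      using P(2) by (simp add: prime_gt_0_nat prod_pos)
    then have "sift (subseq_d A (\<Prod>P)) w = card {a \<in> A. rough w a \<and> \<Prod>P dvd a}"
      using P by (intro sift_subseq_d_rough rough_prod_primes) auto
    also have "\<dots> = card {a \<in> {a \<in> A. rough w a}. P \<subseteq> Q a}"
      using P by (intro arg_cong[where f = card]) (auto simp: prod_primes_dvd_iff Q_def)
    finally show ?thesis .
  qed
  then have "(\<Sum>P\<in>prime_sets w z r. sift (subseq_d A (\<Prod>P)) w)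
      = (\<Sum>P | P \<subseteq> S \<and> card P = r. card {a \<in> {a \<in> A. rough w a}. P \<subseteq> Q a})"
    by (simp add: prime_sets_eq S_def)
  also have "\<dots> = (\<Sum>a | a \<in> A \<and> rough w a. card (Q a) choose r)"
    using assms finite_primes_between by (intro sum_card_supersets_eq_sum_choose) (auto simp: S_def Q_def)
  finally show ?thesis
    by (simp add: Q_def S_def conj_ac)
qed

lemma rough_iff_rough_and_no_prime_divisor_between:
  assumes "w \<le> z"
  shows "rough z a \<longleftrightarrow> rough w a \<and> {p. prime p \<and> w \<le> real p \<and> real p < z \<and> p dvd a} = {}"
  using assms by (auto simp: rough_def)

theorem theorem1:
  fixes A :: "nat set" and k :: nat and w z :: real
  assumes "finite A" and "\<forall>a\<in>A. a > 0"
    and "odd k" and "k > 0"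
    and "w \<le> z"
  shows "real (sift A z) \<le>
    (\<Sum>r<k. (-1) ^ r * (real (k - r) / real k) *
       (\<Sum>P\<in>prime_sets w z r. real (sift (subseq_d A (\<Prod>P)) w)))"
proof -
  define Q where "Q a = {p. prime p \<and> w \<le> real p \<and> real p < z \<and> p dvd a}" for a
  define c where "c r = (-1) ^ r * (real (k - r) / real k)" for r
  have finite_Q: "finite (Q a)" for a
    unfolding Q_def by (rule finite_subset[OF _ finite_primes_between]) auto
  have "real (sift A z) = real (card {a \<in> {a \<in> A. rough w a}. Q a = {}})"
    using assms(5) by (simp add: sift_eq_card_rough rough_iff_rough_and_no_prime_divisor_between Q_def conj_assoc)
  also have "\<dots> = (\<Sum>a | a \<in> A \<and> rough w a. if card (Q a) = 0 then 1 else 0)"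
    using assms(1) finite_Q by (simp add: sum.If_cases Int_def)
  also have "\<dots> \<le> (\<Sum>a | a \<in> A \<and> rough w a. \<Sum>r<k. c r * real (card (Q a) choose r))"
    unfolding c_def by (intro sum_mono weighted_alternating_sum_choose_div_ge assms(3))
  also have "\<dots> = (\<Sum>r<k. c r * (\<Sum>a | a \<in> A \<and> rough w a. real (card (Q a) choose r)))"
    by (simp add: sum_distrib_left sum.swap[of _ "{..<k}"])
  also have "\<dots> = (\<Sum>r<k. c r * (\<Sum>P\<in>prime_sets w z r. real (sift (subseq_d A (\<Prod>P)) w)))"
    by (simp add: sum_prime_sets_sift_eq[OF assms(1)] Q_def flip: of_nat_sum)
  finally show ?thesis
    unfolding c_def .
qed

end
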